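(* Let $G$ be a finite simple connected graph and $\sigma$ a confined position on $G$, with complement $\sigma_c$ defined by $\sigma_c(v)=2\deg(v)-1-\sigma(v)$. Then $p(\sigma_c)=p(\sigma)$.
   Context: Parallel chip-firing game: on a finite simple connected graph $G$, a position $\sigma$ assigns a nonnegative integer $\sigma(v)$ to each vertex. Writing $\Phi_\sigma(v)$ for the number of neighbors $w$ of $v$ with $\sigma(w)\ge\deg(w)$, the step operator is $U\sigma(v)=\sigma(v)+\Phi_\sigma(v)$ if $\sigma(v)\le \deg(v)-1$ and $U\sigma(v)=\sigma(v)+\Phi_\sigma(v)-\deg(v)$ otherwise. A position is confined if every vertex satisfies $\Phi_\sigma(v)\le\sigma(v)\le\Phi_\sigma(v)+\deg(v)-1$. The period $p(\sigma)$ is the least positive integer $p$ with $U^{t+p}\sigma=U^t\sigma$ for all sufficiently large $t$. *)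

theory Defs
  imports Main
begin

definition simple_connected_graph :: "'a set \<Rightarrow> ('a \<Rightarrow> 'a \<Rightarrow> bool) \<Rightarrow> bool" where
  "simple_connected_graph V E \<longleftrightarrow>
     finite V \<and> V \<noteq> {} \<and>
     (\<forall>u w. E u w \<longrightarrow> u \<in> V \<and> w \<in> V) \<and>
     (\<forall>u w. E u w \<longrightarrow> E w u) \<and>
     (\<forall>u. \<not> E u u) \<and>
     (\<forall>u\<in>V. \<forall>w\<in>V. E\<^sup>*\<^sup>* u w)"

definition deg :: "'a set \<Rightarrow> ('a \<Rightarrow> 'a \<Rightarrow> bool) \<Rightarrow> 'a \<Rightarrow> nat" where
  "deg V E v = card {w \<in> V. E v w}"

definition Phi :: "'a set \<Rightarrow> ('a \<Rightarrow> 'a \<Rightarrow> bool) \<Rightarrow> ('a \<Rightarrow> nat) \<Rightarrow> 'a \<Rightarrow> nat" where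
  "Phi V E \<sigma> v = card {w \<in> V. E v w \<and> \<sigma> w \<ge> deg V E w}"

(* parallel chip-firing step operator *)
definition step :: "'a set \<Rightarrow> ('a \<Rightarrow> 'a \<Rightarrow> bool) \<Rightarrow> ('a \<Rightarrow> nat) \<Rightarrow> ('a \<Rightarrow> nat)" where
  "step V E \<sigma> = (\<lambda>v. if \<sigma> v + 1 \<le> deg V E v then \<sigma> v + Phi V E \<sigma> v
                      else \<sigma> v + Phi V E \<sigma> v - deg V E v)"

(* confined: Phi(v) <= sigma(v) <= Phi(v) + deg(v) - 1 for every vertex (stated without
   truncated subtraction) *)
definition confined :: "'a set \<Rightarrow> ('a \<Rightarrow> 'a \<Rightarrow> bool) \<Rightarrow> ('a \<Rightarrow> nat) \<Rightarrow> bool" where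
  "confined V E \<sigma> \<longleftrightarrow>
     (\<forall>v\<in>V. Phi V E \<sigma> v \<le> \<sigma> v \<and> \<sigma> v + 1 \<le> Phi V E \<sigma> v + deg V E v)"

definition complement :: "'a set \<Rightarrow> ('a \<Rightarrow> 'a \<Rightarrow> bool) \<Rightarrow> ('a \<Rightarrow> nat) \<Rightarrow> ('a \<Rightarrow> nat)" where
  "complement V E \<sigma> = (\<lambda>v. 2 * deg V E v - 1 - \<sigma> v)"

definition period :: "'a set \<Rightarrow> ('a \<Rightarrow> 'a \<Rightarrow> bool) \<Rightarrow> ('a \<Rightarrow> nat) \<Rightarrow> nat" where
  "period V E \<sigma> = (LEAST p. 0 < p \<and>
     (\<exists>T. \<forall>t\<ge>T. \<forall>v\<in>V. (step V E ^^ (t + p)) \<sigma> v = (step V E ^^ t) \<sigma> v))"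

end

theory Submission
  imports Defs
begin

(* Call a position bounded if sigma(v) <= 2 deg(v) - 1 at every vertex; a
   confined position is bounded, since Phi(v) <= deg(v).  On bounded positions the complement
   is an involution that swaps "v is active" (sigma(v) >= deg(v)) with "v is inactive", so
   Phi of the complement is deg - Phi.  A short case analysis then shows that the step
   operator commutes with complementation, and since boundedness is preserved by the step,
   U^t (sigma_c) = (U^t sigma)_c on V for every t.  Complementation is injective on bounded
   positions, hence U^(t+p) sigma_c = U^t sigma_c exactly when U^(t+p) sigma = U^t sigma,
   and the two periods, being the least p with the same property, coincide. *)

(* Values on which the complement involves no truncated subtraction. *)
definition bounded_position :: "'a set \<Rightarrow> ('a \<Rightarrow> 'a \<Rightarrow> bool) \<Rightarrow> ('a \<Rightarrow> nat) \<Rightarrow> bool" where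
  "bounded_position V E \<tau> \<longleftrightarrow> (\<forall>v\<in>V. \<tau> v + 1 \<le> 2 * deg V E v)"

lemma Phi_le_deg:
  assumes "finite V"
  shows "Phi V E \<tau> v \<le> deg V E v"
  unfolding Phi_def deg_def using assms by (intro card_mono) auto

lemma confined_imp_bounded:
  assumes "finite V" "confined V E \<sigma>"
  shows "bounded_position V E \<sigma>"
  unfolding bounded_position_def
proof
  fix v assume "v \<in> V"
  then show "\<sigma> v + 1 \<le> 2 * deg V E v"
    using assms(2) Phi_le_deg[OF assms(1), of E \<sigma> v] unfolding confined_def by auto
qed

(* For a bounded position, a vertex is active in the complement iff it is inactive in the
   original; hence the active neighbours of v in the complement are the inactive ones. *)
lemma Phi_complement:
  assumes "finite V" "bounded_position V E \<tau>"
  shows "Phi V E (complement V E \<tau>) v = deg V E v - Phi V E \<tau> v"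
proof -
  let ?N = "{w \<in> V. E v w}" and ?A = "{w \<in> V. E v w \<and> \<tau> w \<ge> deg V E w}"
  have "{w \<in> V. E v w \<and> complement V E \<tau> w \<ge> deg V E w} = ?N - ?A"
    using assms(2) unfolding bounded_position_def complement_def by auto
  moreover have "card (?N - ?A) = card ?N - card ?A"
    using assms(1) by (intro card_Diff_subset) auto
  ultimately show ?thesis unfolding Phi_def deg_def by simp
qed

lemma step_bounded:
  assumes "finite V" "bounded_position V E \<tau>"
  shows "bounded_position V E (step V E \<tau>)"
  unfolding bounded_position_def
proof
  fix v assume "v \<in> V"
  moreover have "Phi V E \<tau> v \<le> deg V E v" using Phi_le_deg assms(1) .
  ultimately show "step V E \<tau> v + 1 \<le> 2 * deg V E v"
    using assms(2) unfolding bounded_position_def step_def by auto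
qed

lemma iterate_bounded:
  assumes "finite V" "bounded_position V E \<sigma>"
  shows "bounded_position V E ((step V E ^^ t) \<sigma>)"
  by (induction t) (simp_all add: assms step_bounded)

(* One step commutes with complementation at every vertex of a bounded position:
   an inactive vertex of tau is active in the complement and vice versa, and the
   chip counts match by Phi_complement. *)
lemma step_complement:
  assumes "finite V" "bounded_position V E \<tau>" "v \<in> V"
  shows "step V E (complement V E \<tau>) v = complement V E (step V E \<tau>) v"
proof -
  have le: "Phi V E \<tau> v \<le> deg V E v" using Phi_le_deg assms(1) .
  have bnd: "\<tau> v + 1 \<le> 2 * deg V E v"
    using assms(2,3) unfolding bounded_position_def by auto
  show ?thesis
    unfolding step_def Phi_complement[OF assms(1,2)] using le bnd
    unfolding complement_def by auto
qed

lemma step_congruent: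
  assumes "\<forall>w\<in>V. f w = g w" "v \<in> V"
  shows "step V E f v = step V E g v"
proof -
  have "Phi V E f v = Phi V E g v"
    unfolding Phi_def using assms(1) by (metis (no_types, lifting) mem_Collect_eq)
  then show ?thesis unfolding step_def using assms by simp
qed

lemma iterate_complement:
  assumes "finite V" "bounded_position V E \<sigma>" "v \<in> V"
  shows "(step V E ^^ t) (complement V E \<sigma>) v = complement V E ((step V E ^^ t) \<sigma>) v"
  using assms(3)
proof (induction t arbitrary: v)
  case 0
  then show ?case by simp
next
  case (Suc t)
  have "(step V E ^^ Suc t) (complement V E \<sigma>) v
      = step V E (complement V E ((step V E ^^ t) \<sigma>)) v"
    using step_congruent[of V] Suc by simp
  also have "\<dots> = complement V E ((step V E ^^ Suc t) \<sigma>) v"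
    using step_complement[OF assms(1) iterate_bounded[OF assms(1,2)] Suc.prems] by simp
  finally show ?case .
qed

lemma complement_eq_iff:
  assumes "bounded_position V E f" "bounded_position V E g" "v \<in> V"
  shows "complement V E f v = complement V E g v \<longleftrightarrow> f v = g v"
  using assms unfolding bounded_position_def complement_def by force

theorem corollary2p4:
  fixes V :: "'a set" and E :: "'a \<Rightarrow> 'a \<Rightarrow> bool" and \<sigma> :: "'a \<Rightarrow> nat"
  assumes "simple_connected_graph V E"
    and "confined V E \<sigma>"
  shows "period V E (complement V E \<sigma>) = period V E \<sigma>"
proof -
  have fin: "finite V" using assms(1) unfolding simple_connected_graph_def by auto
  have bnd: "bounded_position V E \<sigma>" using confined_imp_bounded[OF fin assms(2)] .
  have same_recurrence: "\<And>t p v. v \<in> V \<Longrightarrow>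
     (step V E ^^ (t + p)) (complement V E \<sigma>) v = (step V E ^^ t) (complement V E \<sigma>) v
     \<longleftrightarrow> (step V E ^^ (t + p)) \<sigma> v = (step V E ^^ t) \<sigma> v"
    using iterate_complement[OF fin bnd]
      complement_eq_iff[OF iterate_bounded[OF fin bnd] iterate_bounded[OF fin bnd]] by metis
  show ?thesis unfolding period_def using same_recurrence by simp
qed

end
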